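(* Let $n=2m$, let $\Delta'$ be the simplicial complex on vertex set $\{(i,j):1\le i\le j\le n,\ i+j\ne n+1\}$ whose faces are the sets $F$ with $\prod_{(i,j)\in F}x_{ij}\notin K(2,n)$, where $K(2,n)$ is as in the context. Let $P$ be a facet of $\Delta'$, $P$ a facet of $\Delta_A$ with $A\in\mathcal A$, and let $x\in P$. Then there are exactly two facets of $\Delta'$ containing $P\setminus\{x\}$, namely $P$ and a facet $Q$ described as follows: (i) if $x$ is a turn (left or right) of $P$, then $Q$ is the unique facet of $\Delta_A$ other than $P$ containing $P\setminus\{x\}$ (the path obtained from $P$ by flipping $x$); (ii) if $x$ is isolated with index $i\in A$, then with $A'=(A\setminus\{i\})\cup\{n+1-i\}$, $P\setminus\{x\}$ is a face of $\Delta_{A'}$ contained in a unique facet $Q$ of $\Delta_{A'}$.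
   Context: $K(2,n)\subset K[x_{ij}:1\le i\le j\le n]$ is generated by the products $x_{ij}x_{hk}$ ($i\le j$, $h\le k$) not involving any $x_{a,n+1-a}$ and such that either $a+b=n+1$ for some $a\in\{i,j\}$, $b\in\{h,k\}$, or $i<h$ and $j<k$. $\mathcal A$ is the family of $m$-element subsets $A\subseteq[n]$ with $i+j\ne n+1$ for all $i,j\in A$. For $A=\{a_1<\dots<a_m\}\in\mathcal A$, $T_A=\{(i,j): i\le j,\ i,j\in A\}$ and $\Delta_A=\{F\in\Delta':F\subseteq T_A\}$. It is a fact (established in the paper) that the facets of $\Delta_A$ are exactly the paths in $T_A$ starting at $(a_1,a_m)$ and ending at some diagonal position $(a_i,a_i)$, each step going horizontally left ($(a_r,a_s)\to(a_r,a_{s-1})$) or vertically down ($(a_r,a_s)\to(a_{r+1},a_s)$), and that every facet of $\Delta'$ is a facet of $\Delta_A$ for exactly one $A$. Types of points of such a path $P$: an interior point is a left turn if the step into it is horizontal and the step out is vertical, a right turn if the step in is vertical and the step out horizontal; the last point (if $P$ has at least two points) is a left turn if the last step is horizontal and a right turn if it is vertical; all other points are isolated, and each isolated point is the only point of $P$ having a certain $c\in A$ as row or column index, $c$ being called its index. *)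

theory Defs
  imports Main "HOL-Library.Multiset"
begin

text \<open>Monomials in the variables x_ij are represented as multisets of index pairs.
  A monomial lies in a monomial ideal iff it is divisible by one of the generators.\<close>

definition in_monomial_ideal :: "'a multiset set \<Rightarrow> 'a multiset \<Rightarrow> bool" where
  "in_monomial_ideal G M \<longleftrightarrow> (\<exists>g\<in>G. g \<subseteq># M)"

definition K2_gens :: "nat \<Rightarrow> (nat \<times> nat) multiset set" where
  "K2_gens n = {{#(i,j),(h,k)#} | i j h k.
      1 \<le> i \<and> i \<le> j \<and> j \<le> n \<and> 1 \<le> h \<and> h \<le> k \<and> k \<le> n \<and>
      i + j \<noteq> n + 1 \<and> h + k \<noteq> n + 1 \<and>
      ((\<exists>a\<in>{i,j}. \<exists>b\<in>{h,k}. a + b = n + 1) \<or> (i < h \<and> j < k))}"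

definition vertsD :: "nat \<Rightarrow> (nat \<times> nat) set" where
  "vertsD n = {(i,j). 1 \<le> i \<and> i \<le> j \<and> j \<le> n \<and> i + j \<noteq> n + 1}"

definition DeltaP :: "nat \<Rightarrow> (nat \<times> nat) set set" where
  "DeltaP n = {F. F \<subseteq> vertsD n \<and> \<not> in_monomial_ideal (K2_gens n) (mset_set F)}"

definition facet :: "'a set set \<Rightarrow> 'a set \<Rightarrow> bool" where
  "facet D F \<longleftrightarrow> F \<in> D \<and> (\<forall>G\<in>D. F \<subseteq> G \<longrightarrow> G = F)"

definition calA :: "nat \<Rightarrow> nat \<Rightarrow> nat set set" where
  "calA n m = {A. A \<subseteq> {1..n} \<and> card A = m \<and> (\<forall>i\<in>A. \<forall>j\<in>A. i + j \<noteq> n + 1)}"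

definition T_of :: "nat set \<Rightarrow> (nat \<times> nat) set" where
  "T_of A = {(i,j). i \<le> j \<and> i \<in> A \<and> j \<in> A}"

definition DeltaA :: "nat \<Rightarrow> nat set \<Rightarrow> (nat \<times> nat) set set" where
  "DeltaA n A = {F \<in> DeltaP n. F \<subseteq> T_of A}"

definition adjA :: "nat set \<Rightarrow> nat \<Rightarrow> nat \<Rightarrow> bool" where
  "adjA A v w \<longleftrightarrow> v \<in> A \<and> w \<in> A \<and> v < w \<and> \<not> (\<exists>z\<in>A. v < z \<and> z < w)"

text \<open>Steps of a path P in T_A into / out of the point (u,v).
  Horizontal step: (a_r,a_s) -> (a_r,a_{s-1}); vertical step: (a_r,a_s) -> (a_{r+1},a_s).\<close>
definition in_h :: "nat set \<Rightarrow> (nat \<times> nat) set \<Rightarrow> nat \<times> nat \<Rightarrow> bool" where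
  "in_h A P p \<longleftrightarrow> (\<exists>w. adjA A (snd p) w \<and> (fst p, w) \<in> P)"
definition in_v :: "nat set \<Rightarrow> (nat \<times> nat) set \<Rightarrow> nat \<times> nat \<Rightarrow> bool" where
  "in_v A P p \<longleftrightarrow> (\<exists>w. adjA A w (fst p) \<and> (w, snd p) \<in> P)"
definition out_h :: "nat set \<Rightarrow> (nat \<times> nat) set \<Rightarrow> nat \<times> nat \<Rightarrow> bool" where
  "out_h A P p \<longleftrightarrow> (\<exists>w. adjA A w (snd p) \<and> (fst p, w) \<in> P)"
definition out_v :: "nat set \<Rightarrow> (nat \<times> nat) set \<Rightarrow> nat \<times> nat \<Rightarrow> bool" where
  "out_v A P p \<longleftrightarrow> (\<exists>w. adjA A (fst p) w \<and> (w, snd p) \<in> P)"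

text \<open>Left turn: interior point with horizontal step in and vertical step out, or last point
  (no step out) reached by a horizontal step. Right turn: symmetric.\<close>
definition left_turn :: "nat set \<Rightarrow> (nat \<times> nat) set \<Rightarrow> nat \<times> nat \<Rightarrow> bool" where
  "left_turn A P p \<longleftrightarrow> p \<in> P \<and> in_h A P p \<and>
     (out_v A P p \<or> \<not> (out_h A P p \<or> out_v A P p))"
definition right_turn :: "nat set \<Rightarrow> (nat \<times> nat) set \<Rightarrow> nat \<times> nat \<Rightarrow> bool" where
  "right_turn A P p \<longleftrightarrow> p \<in> P \<and> in_v A P p \<and>
     (out_h A P p \<or> \<not> (out_h A P p \<or> out_v A P p))"
definition isolated :: "nat set \<Rightarrow> (nat \<times> nat) set \<Rightarrow> nat \<times> nat \<Rightarrow> bool" where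
  "isolated A P p \<longleftrightarrow> p \<in> P \<and> \<not> left_turn A P p \<and> \<not> right_turn A P p"

definition is_index :: "(nat \<times> nat) set \<Rightarrow> nat \<times> nat \<Rightarrow> nat \<Rightarrow> bool" where
  "is_index P p c \<longleftrightarrow> (c = fst p \<or> c = snd p) \<and>
     (\<forall>q\<in>P. (c = fst q \<or> c = snd q) \<longrightarrow> q = p)"

end

theory Submission
  imports Defs
begin

text \<open>A set of vertices inside the triangle \<open>T_A\<close> is a face of \<open>\<Delta>'\<close> exactly when no two of its
  points \<open>(i, j)\<close>, \<open>(h, k)\<close> satisfy \<open>i < h\<close> and \<open>j < k\<close>, i.e. when it is a strict antichain.
  After replacing the elements of \<open>A\<close> by their ranks, such an antichain meets every diagonal
  \<open>j - i\<close> at most once, so it has at most \<open>|A| = m\<close> points, and a one-dimensional Helly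
  argument shows that any smaller antichain can be enlarged: the facets of \<open>\<Delta>_A\<close> are the
  antichains with \<open>m\<close> points, and they use every element of \<open>A\<close> as an index.

  Any facet of \<open>\<Delta>'\<close> through \<open>P - {x}\<close> uses all indices used by \<open>P - {x}\<close> and, \<open>n\<close> being even,
  never both \<open>c\<close> and \<open>n + 1 - c\<close>. If \<open>x\<close> is a turn, its two neighbours on the path still
  carry its indices, so these facets all lie in \<open>\<Delta>_A\<close>, and the only points that can be
  added to \<open>P - {x}\<close> are \<open>x\<close> and the opposite corner of the turn. If \<open>x\<close> is isolated with
  index \<open>i\<close>, then \<open>P - {x}\<close> is a maximum antichain for \<open>A - {i}\<close>; the facets lie in \<open>\<Delta>_A\<close>
  or in \<open>\<Delta>_A'\<close>, and in each a unique point carrying the new index can be added.\<close>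

section \<open>Maximum strict antichains in a triangle\<close>

definition strictly_comparable :: "nat \<times> nat \<Rightarrow> nat \<times> nat \<Rightarrow> bool" where
  "strictly_comparable p q \<longleftrightarrow>
     (fst p < fst q \<and> snd p < snd q) \<or> (fst q < fst p \<and> snd q < snd p)"

definition strict_antichain :: "(nat \<times> nat) set \<Rightarrow> bool" where
  "strict_antichain S \<longleftrightarrow> (\<forall>p\<in>S. \<forall>q\<in>S. \<not> strictly_comparable p q)"

definition maximum_antichain :: "nat set \<Rightarrow> (nat \<times> nat) set \<Rightarrow> bool" where
  "maximum_antichain B S \<longleftrightarrow> S \<subseteq> T_of B \<and> strict_antichain S \<and> card S = card B"

definition addable :: "nat set \<Rightarrow> (nat \<times> nat) set \<Rightarrow> (nat \<times> nat) set" where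
  "addable B S = {t \<in> T_of B - S. \<forall>q\<in>S. \<not> strictly_comparable t q}"

definition indices :: "(nat \<times> nat) set \<Rightarrow> nat set" where
  "indices S = fst ` S \<union> snd ` S"

lemma strictly_comparable_Pair:
  "strictly_comparable (a, b) (c, d) \<longleftrightarrow> (a < c \<and> b < d) \<or> (c < a \<and> d < b)"
  by (simp add: strictly_comparable_def)

lemma strictly_comparable_commute: "strictly_comparable p q \<longleftrightarrow> strictly_comparable q p"
  by (auto simp: strictly_comparable_def)

lemma strictly_comparable_irrefl [simp]: "\<not> strictly_comparable p p"
  by (simp add: strictly_comparable_def)

lemma strict_antichain_subset: "strict_antichain S \<Longrightarrow> R \<subseteq> S \<Longrightarrow> strict_antichain R"
  by (auto simp: strict_antichain_def)

lemma strict_antichain_insert_addable: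
  "strict_antichain S \<Longrightarrow> t \<in> addable B S \<Longrightarrow> strict_antichain (insert t S)"
  by (auto simp: strict_antichain_def addable_def strictly_comparable_def)

lemma finite_subset_T_of: "finite B \<Longrightarrow> S \<subseteq> T_of B \<Longrightarrow> finite S"
  by (rule finite_subset[of _ "B \<times> B"]) (auto simp: T_of_def)

lemma T_of_mono: "B \<subseteq> C \<Longrightarrow> T_of B \<subseteq> T_of C"
  by (auto simp: T_of_def)

lemma indices_T_of: "S \<subseteq> T_of B \<Longrightarrow> indices S \<subseteq> B"
  by (auto simp: indices_def T_of_def)

lemma mem_indicesI: "(a, b) \<in> S \<Longrightarrow> a \<in> indices S" "(a, b) \<in> S \<Longrightarrow> b \<in> indices S"
  by (force simp: indices_def)+

lemma indices_mono: "R \<subseteq> S \<Longrightarrow> indices R \<subseteq> indices S"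
  by (auto simp: indices_def)

definition rank :: "nat set \<Rightarrow> nat \<Rightarrow> nat" where
  "rank B b = card {a \<in> B. a < b}"

lemma rank_mono: "finite B \<Longrightarrow> a \<le> b \<Longrightarrow> rank B a \<le> rank B b"
  unfolding rank_def by (intro card_mono) auto

lemma rank_strict_mono:
  assumes "finite B" "a \<in> B" "a < b"
  shows "rank B a < rank B b"
  unfolding rank_def using assms by (intro psubset_card_mono) auto

lemma rank_less_iff: "finite B \<Longrightarrow> a \<in> B \<Longrightarrow> b \<in> B \<Longrightarrow> rank B a < rank B b \<longleftrightarrow> a < b"
  using rank_strict_mono[of B a b] rank_mono[of B b a] by (meson leD not_le)

lemma inj_on_rank: "finite B \<Longrightarrow> inj_on (rank B) B"
  using rank_less_iff[of B] by (metis inj_onI less_irrefl linorder_neqE_nat)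

lemma rank_less_card: "finite B \<Longrightarrow> b \<in> B \<Longrightarrow> rank B b < card B"
  unfolding rank_def by (intro psubset_card_mono) auto

lemma rank_image: "finite B \<Longrightarrow> rank B ` B = {..<card B}"
  using inj_on_rank[of B] rank_less_card[of B] by (intro card_subset_eq) (auto simp: card_image)

lemma strictly_comparable_rank:
  assumes "finite B" "a \<in> B" "b \<in> B" "c \<in> B" "d \<in> B"
  shows "strictly_comparable (rank B a, rank B b) (rank B c, rank B d) \<longleftrightarrow>
    strictly_comparable (a, b) (c, d)"
  using assms by (simp add: strictly_comparable_Pair rank_less_iff)

definition diagonal :: "nat set \<Rightarrow> nat \<times> nat \<Rightarrow> nat" where
  "diagonal B q = rank B (snd q) - rank B (fst q)"

lemma diagonal_less_card: "finite B \<Longrightarrow> q \<in> T_of B \<Longrightarrow> diagonal B q < card B"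
  using rank_less_card[of B "snd q"] by (auto simp: diagonal_def T_of_def)

text \<open>Distinct points on the same diagonal are strictly comparable.\<close>

lemma inj_on_diagonal:
  assumes B: "finite B" and S: "S \<subseteq> T_of B" "strict_antichain S"
  shows "inj_on (diagonal B) S"
proof (rule inj_onI)
  fix p q assume p: "p \<in> S" and q: "q \<in> S" and eq: "diagonal B p = diagonal B q"
  obtain a b c d where pq: "p = (a, b)" "q = (c, d)" by fastforce
  have in_B: "a \<in> B" "b \<in> B" "c \<in> B" "d \<in> B" and "a \<le> b" "c \<le> d"
    using p q S(1) pq by (auto simp: T_of_def)
  then have "rank B a \<le> rank B b" "rank B c \<le> rank B d"
    using rank_mono[OF B] by auto
  moreover have "\<not> strictly_comparable (rank B a, rank B b) (rank B c, rank B d)"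
    using S(2) p q pq strictly_comparable_rank[OF B in_B] by (auto simp: strict_antichain_def)
  ultimately have "rank B a = rank B c" "rank B b = rank B d"
    using eq pq by (auto simp: diagonal_def strictly_comparable_Pair)
  then show "p = q"
    using inj_on_rank[OF B] in_B pq by (simp add: inj_on_eq_iff)
qed

lemma card_strict_antichain_le:
  assumes B: "finite B" and S: "S \<subseteq> T_of B" "strict_antichain S"
  shows "card S \<le> card B"
proof -
  have "diagonal B ` S \<subseteq> {..<card B}"
    using diagonal_less_card[OF B] S(1) by auto
  then have "card (diagonal B ` S) \<le> card B"
    by (metis card_lessThan card_mono finite_lessThan)
  then show ?thesis
    using card_image[OF inj_on_diagonal[OF B S]] by simp
qed

text \<open>In rank coordinates, the point \<open>(j, j + k)\<close> of the diagonal \<open>k\<close> is comparable with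
  none of the points \<open>q\<close> off that diagonal exactly when \<open>j\<close> lies between \<open>rank (fst q)\<close> and
  \<open>rank (snd q) - k\<close>. These intervals pairwise intersect, so (Helly in dimension one) their
  lower ends have a maximum lying in all of them.\<close>

lemma diagonal_point_addable:
  assumes B: "finite B" and S: "S \<subseteq> T_of B" and k: "k \<notin> diagonal B ` S"
    and ab: "a \<in> B" "b \<in> B" "rank B b = rank B a + k"
    and between: "\<And>q. q \<in> S \<Longrightarrow> min (rank B (fst q)) (rank B (snd q) - k) \<le> rank B a \<and>
      rank B a \<le> max (rank B (fst q)) (rank B (snd q) - k)"
  shows "(a, b) \<in> addable B S"
proof -
  have "a \<le> b"
    using ab rank_less_iff[OF B] by (metis le_add1 not_le)
  moreover have "(a, b) \<notin> S"
    using k ab by (force simp: diagonal_def)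
  moreover have "\<not> strictly_comparable (a, b) q" if q: "q \<in> S" for q
  proof -
    obtain c d where cd: "q = (c, d)" by fastforce
    have cd_B: "c \<in> B" "d \<in> B" and "c \<le> d"
      using q S cd by (auto simp: T_of_def)
    moreover have "diagonal B q \<noteq> k"
      using k q by auto
    ultimately have "\<not> strictly_comparable (rank B a, rank B b) (rank B c, rank B d)"
      using between[OF q] rank_mono[OF B, of c d] ab cd
      by (auto simp: diagonal_def strictly_comparable_Pair)
    then show ?thesis
      using strictly_comparable_rank[OF B ab(1,2) cd_B] cd by simp
  qed
  ultimately show ?thesis
    using ab by (auto simp: addable_def T_of_def)
qed

lemma antichain_diagonal_intervals_intersect:
  assumes B: "finite B" and S: "S \<subseteq> T_of B" "strict_antichain S" and pq: "p \<in> S" "q \<in> S"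
  shows "min (rank B (fst p)) (rank B (snd p) - k) \<le> max (rank B (fst q)) (rank B (snd q) - k)"
proof (cases "rank B (fst p) \<le> rank B (fst q)")
  case False
  then have "fst q < fst p"
    using rank_mono[OF B] by (metis not_le)
  moreover have "\<not> strictly_comparable q p"
    using S(2) pq by (auto simp: strict_antichain_def)
  ultimately have "snd p \<le> snd q"
    by (auto simp: strictly_comparable_def)
  then show ?thesis
    using rank_mono[OF B] by fastforce
qed simp

lemma addable_nonempty:
  assumes B: "finite B" and S: "S \<subseteq> T_of B" "strict_antichain S" and less: "card S < card B"
  shows "addable B S \<noteq> {}"
proof -
  have finS: "finite S"
    using finite_subset_T_of[OF B S(1)] .
  have "card (diagonal B ` S) < card {..<card B}"
    using card_image_le[OF finS, of "diagonal B"] less by simp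
  then have "\<not> {..<card B} \<subseteq> diagonal B ` S"
    by (meson card_mono finS finite_imageI not_le)
  then obtain k where k: "k < card B" "k \<notin> diagonal B ` S"
    by blast
  define lo where "lo q = min (rank B (fst q)) (rank B (snd q) - k)" for q :: "nat \<times> nat"
  define j where "j = Max (insert 0 (lo ` S))"
  have fin: "finite (insert 0 (lo ` S))"
    using finS by simp
  have j_ge: "lo q \<le> j" if "q \<in> S" for q
    unfolding j_def using fin that by (intro Max_ge) auto
  from Max_in[OF fin] consider "j = 0" | p where "p \<in> S" "j = lo p"
    unfolding j_def[symmetric] by auto
  note j_cases = this
  have j_le: "j \<le> max (rank B (fst q)) (rank B (snd q) - k)" if "q \<in> S" for q
    by (rule j_cases) (use antichain_diagonal_intervals_intersect[OF B S _ that] lo_def in auto)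
  have "j + k < card B"
    by (rule j_cases) (use k rank_less_card[OF B] S(1) in \<open>force simp: lo_def T_of_def\<close>)+
  then obtain a b where ab: "a \<in> B" "rank B a = j" "b \<in> B" "rank B b = j + k"
    using rank_image[OF B] by (metis imageE le_add1 le_less_trans lessThan_iff)
  then have "(a, b) \<in> addable B S"
    using j_ge j_le by (intro diagonal_point_addable[OF B S(1) k(2)]) (auto simp: lo_def)
  then show ?thesis
    by blast
qed

lemma maximum_antichain_addable_empty:
  assumes B: "finite B" and S: "maximum_antichain B S"
  shows "addable B S = {}"
proof (rule ccontr)
  assume "addable B S \<noteq> {}"
  then obtain t where t: "t \<in> addable B S" by blast
  have "insert t S \<subseteq> T_of B" "strict_antichain (insert t S)"
    using S t strict_antichain_insert_addable[of S t B]
    by (auto simp: maximum_antichain_def addable_def)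
  then have "card (insert t S) \<le> card B"
    using card_strict_antichain_le[OF B] by blast
  moreover have "finite S"
    using S finite_subset_T_of[OF B] by (auto simp: maximum_antichain_def)
  ultimately show False
    using S t by (simp add: maximum_antichain_def addable_def)
qed

lemma maximum_antichain_blocked:
  assumes "finite B" "maximum_antichain B S" "t \<in> T_of B" "t \<notin> S"
  obtains q where "q \<in> S" "strictly_comparable t q"
  using maximum_antichain_addable_empty[OF assms(1,2)] assms(3,4) unfolding addable_def by blast

lemma maximum_antichain_indices:
  assumes B: "finite B" and S: "maximum_antichain B S"
  shows "indices S = B"
proof
  show "indices S \<subseteq> B"
    using S indices_T_of by (auto simp: maximum_antichain_def)
  show "B \<subseteq> indices S"
  proof
    fix b assume b: "b \<in> B"
    show "b \<in> indices S"
    proof (rule ccontr)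
      assume "b \<notin> indices S"
      then have "S \<subseteq> T_of (B - {b})"
        using S by (force simp: maximum_antichain_def T_of_def indices_def)
      then have "card S \<le> card (B - {b})"
        using card_strict_antichain_le[of "B - {b}" S] B S by (auto simp: maximum_antichain_def)
      moreover have "card B > 0"
        using B b card_gt_0_iff by blast
      ultimately show False
        using S B b by (simp add: maximum_antichain_def card_Diff_singleton)
    qed
  qed
qed

lemma maximum_antichain_addable_index:
  assumes B: "finite B" and S: "maximum_antichain B S" and t: "t \<in> addable (insert c B) S"
  shows "c = fst t \<or> c = snd t"
proof (rule ccontr)
  assume "\<not> ?thesis"
  then have "t \<in> addable B S"
    using t by (auto simp: addable_def T_of_def)
  then show False
    using maximum_antichain_addable_empty[OF B S] by blast
qed

lemma maximum_antichain_not_straddling: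
  assumes B: "finite B" and S: "maximum_antichain B S" and u: "u \<in> B" "u < c"
  obtains q where "q \<in> S" "\<not> (fst q < c \<and> c < snd q)"
proof -
  define b where "b = Max {a \<in> B. a < c}"
  have fin: "finite {a \<in> B. a < c}"
    using B by simp
  have b: "b \<in> B" "b < c"
    using Max_in[OF fin] u unfolding b_def by blast+
  have b_max: "a \<le> b" if "a \<in> B" "a < c" for a
    using Max_ge[OF fin] that unfolding b_def by auto
  have "(b, b) \<in> T_of B"
    using b by (simp add: T_of_def)
  show thesis
  proof (cases "(b, b) \<in> S")
    case False
    then obtain q where q: "q \<in> S" "strictly_comparable (b, b) q"
      using maximum_antichain_blocked[OF B S \<open>(b, b) \<in> T_of B\<close>] by blast
    moreover have "fst q \<in> B"
      using q(1) S by (auto simp: maximum_antichain_def T_of_def)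
    ultimately have "\<not> (fst q < c \<and> c < snd q)"
      using b b_max[of "fst q"] by (auto simp: strictly_comparable_def)
    then show thesis
      using that q(1) by blast
  qed (use that in auto)
qed

text \<open>If \<open>(u, c) < (c, v)\<close> could both be added, every point of \<open>S\<close> would straddle \<open>c\<close>.\<close>

lemma maximum_antichain_addable_new_index_comparable:
  assumes B: "finite B" and S: "maximum_antichain B S" and c: "c \<notin> B"
    and t1: "t1 \<in> addable (insert c B) S" and t2: "t2 \<in> addable (insert c B) S"
    and less: "fst t1 < fst t2" "snd t1 < snd t2"
  shows False
proof -
  have ordered: "fst t1 \<le> snd t1" "fst t2 \<le> snd t2"
    using t1 t2 by (auto simp: addable_def T_of_def)
  have "snd t1 = c" "fst t2 = c"
    using maximum_antichain_addable_index[OF B S t1] maximum_antichain_addable_index[OF B S t2]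
      less ordered by auto
  then have u: "fst t1 \<in> B" "fst t1 < c" and v: "c < snd t2"
    using t1 less by (auto simp: addable_def T_of_def)
  have "fst q < c \<and> c < snd q" if q: "q \<in> S" for q
  proof -
    have "fst q \<in> B" "snd q \<in> B" "fst q \<le> snd q"
      using q S by (auto simp: maximum_antichain_def T_of_def)
    moreover have "fst q \<noteq> c" "snd q \<noteq> c"
      using calculation c by auto
    moreover have "\<not> strictly_comparable t1 q" "\<not> strictly_comparable t2 q"
      using t1 t2 q by (auto simp: addable_def)
    ultimately show ?thesis
      using c u v \<open>snd t1 = c\<close> \<open>fst t2 = c\<close>
      by (cases t1, cases t2, cases q) (auto simp: strictly_comparable_Pair not_less)
  qed
  then show False
    using maximum_antichain_not_straddling[OF B S u] by blast
qed

lemma maximum_antichain_addable_incomparable: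
  assumes B: "finite B" and S: "maximum_antichain B S" and c: "c \<notin> B"
    and t: "t \<in> addable (insert c B) S" and t': "t' \<in> addable (insert c B) S"
    and incomparable: "\<not> strictly_comparable t' t"
  shows "t' = t"
proof (rule ccontr)
  assume ne: "t' \<noteq> t"
  then have "t' \<in> addable (insert c B) (insert t S)"
    using t' incomparable by (auto simp: addable_def)
  moreover have "strict_antichain (insert t S)"
    using S t strict_antichain_insert_addable by (auto simp: maximum_antichain_def)
  ultimately have "strict_antichain (insert t' (insert t S))"
    by (rule strict_antichain_insert_addable[rotated])
  moreover have "insert t' (insert t S) \<subseteq> T_of (insert c B)"
    using S t t' T_of_mono[of B "insert c B"] by (auto simp: maximum_antichain_def addable_def)
  ultimately have "card (insert t' (insert t S)) \<le> card (insert c B)"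
    using card_strict_antichain_le[of "insert c B"] B by blast
  moreover have "finite S"
    using S finite_subset_T_of[OF B] by (auto simp: maximum_antichain_def)
  ultimately show False
    using S t t' ne c B by (simp add: maximum_antichain_def addable_def)
qed

lemma maximum_antichain_addable_new_index:
  assumes B: "finite B" and S: "maximum_antichain B S" and c: "c \<notin> B"
  obtains t where "addable (insert c B) S = {t}" and "c = fst t \<or> c = snd t"
proof -
  have "addable (insert c B) S \<noteq> {}"
    using S B c T_of_mono[of B "insert c B"]
    by (intro addable_nonempty) (auto simp: maximum_antichain_def)
  then obtain t where t: "t \<in> addable (insert c B) S" by blast
  have "t' = t" if t': "t' \<in> addable (insert c B) S" for t'
  proof (cases "strictly_comparable t' t")
    case True
    then consider "fst t < fst t'" "snd t < snd t'" | "fst t' < fst t" "snd t' < snd t"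
      unfolding strictly_comparable_def by blast
    then show ?thesis
      using maximum_antichain_addable_new_index_comparable[OF B S c t t']
        maximum_antichain_addable_new_index_comparable[OF B S c t' t]
      by cases blast+
  qed (rule maximum_antichain_addable_incomparable[OF B S c t t'])
  then show ?thesis
    using that t maximum_antichain_addable_index[OF B S t] by blast
qed

lemma maximum_antichains_above:
  assumes B: "finite B" and S: "S \<subseteq> T_of B" "strict_antichain S" "card S + 1 = card B"
  shows "{F. maximum_antichain B F \<and> S \<subseteq> F} = (\<lambda>t. insert t S) ` addable B S"
proof (intro equalityI subsetI)
  have finS: "finite S"
    using finite_subset_T_of[OF B S(1)] .
  fix F assume "F \<in> {F. maximum_antichain B F \<and> S \<subseteq> F}"
  then have F: "maximum_antichain B F" "S \<subseteq> F" by auto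
  then have "finite F"
    using finite_subset_T_of[OF B] by (auto simp: maximum_antichain_def)
  have "\<not> F \<subseteq> S"
    using F S finS card_mono[OF finS] by (auto simp: maximum_antichain_def)
  then obtain t where t: "t \<in> F - S"
    by blast
  have "card (insert t S) = card F"
    using t finS S F by (simp add: maximum_antichain_def)
  then have "F = insert t S"
    using t F \<open>finite F\<close> by (intro card_seteq[symmetric]) auto
  moreover have "t \<in> addable B S"
    using F t by (auto simp: maximum_antichain_def addable_def strict_antichain_def)
  ultimately show "F \<in> (\<lambda>t. insert t S) ` addable B S" by blast
next
  fix F assume "F \<in> (\<lambda>t. insert t S) ` addable B S"
  then obtain t where "t \<in> addable B S" "F = insert t S" by blast
  then show "F \<in> {F. maximum_antichain B F \<and> S \<subseteq> F}"
    using S strict_antichain_insert_addable[of S t B] finite_subset_T_of[OF B S(1)]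
    by (auto simp: maximum_antichain_def addable_def)
qed

section \<open>The complexes \<open>\<Delta>'\<close> and \<open>\<Delta>_A\<close>\<close>

definition K2_pair :: "nat \<Rightarrow> nat \<times> nat \<Rightarrow> nat \<times> nat \<Rightarrow> bool" where
  "K2_pair n p q \<longleftrightarrow>
     (\<exists>a\<in>{fst p, snd p}. \<exists>b\<in>{fst q, snd q}. a + b = n + 1) \<or> strictly_comparable p q"

lemma add_mset_pair_subseteq_mset_set:
  assumes "finite F"
  shows "{#p, q#} \<subseteq># mset_set F \<longleftrightarrow> p \<noteq> q \<and> p \<in> F \<and> q \<in> F"
proof
  assume sub: "{#p, q#} \<subseteq># mset_set F"
  then have "count {#p, q#} p \<le> count (mset_set F) p"
    by (rule mset_subset_eq_count)
  then have "p \<noteq> q"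
    by (auto simp: count_mset_set' split: if_splits)
  moreover have "p \<in> F" "q \<in> F"
    using sub assms by (auto dest: mset_subset_eqD)
  ultimately show "p \<noteq> q \<and> p \<in> F \<and> q \<in> F"
    by blast
next
  assume "p \<noteq> q \<and> p \<in> F \<and> q \<in> F"
  then show "{#p, q#} \<subseteq># mset_set F"
    using assms by (auto simp: subseteq_mset_def count_mset_set')
qed

lemma DeltaP_iff:
  "F \<in> DeltaP n \<longleftrightarrow> F \<subseteq> vertsD n \<and> (\<forall>p\<in>F. \<forall>q\<in>F. p \<noteq> q \<longrightarrow> \<not> K2_pair n p q)"
proof (cases "F \<subseteq> vertsD n")
  case True
  then have fin: "finite F"
    by (rule finite_subset) (auto intro: finite_subset[of _ "{1..n} \<times> {1..n}"] simp: vertsD_def)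
  have "in_monomial_ideal (K2_gens n) (mset_set F) \<longleftrightarrow>
      (\<exists>p\<in>F. \<exists>q\<in>F. p \<noteq> q \<and> K2_pair n p q)"
  proof
    assume "in_monomial_ideal (K2_gens n) (mset_set F)"
    then obtain i j h k where "{#(i, j), (h, k)#} \<subseteq># mset_set F"
      and "(\<exists>a\<in>{i, j}. \<exists>b\<in>{h, k}. a + b = n + 1) \<or> (i < h \<and> j < k)"
      unfolding in_monomial_ideal_def K2_gens_def by blast
    then have "(i, j) \<in> F" "(h, k) \<in> F" "(i, j) \<noteq> (h, k)" "K2_pair n (i, j) (h, k)"
      using add_mset_pair_subseteq_mset_set[OF fin] by (auto simp: K2_pair_def strictly_comparable_Pair)
    then show "\<exists>p\<in>F. \<exists>q\<in>F. p \<noteq> q \<and> K2_pair n p q"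
      by blast
  next
    assume "\<exists>p\<in>F. \<exists>q\<in>F. p \<noteq> q \<and> K2_pair n p q"
    then obtain i j h k where pq: "(i, j) \<in> F" "(h, k) \<in> F" "(i, j) \<noteq> (h, k)"
      and "K2_pair n (i, j) (h, k)"
      by (metis surj_pair)
    then have K2: "(\<exists>a\<in>{i, j}. \<exists>b\<in>{h, k}. a + b = n + 1) \<or> (i < h \<and> j < k) \<or> (h < i \<and> k < j)"
      by (simp add: K2_pair_def strictly_comparable_Pair)
    have "(i, j) \<in> vertsD n" "(h, k) \<in> vertsD n"
      using pq True by auto
    then have "{#(i, j), (h, k)#} \<in> K2_gens n \<or> {#(h, k), (i, j)#} \<in> K2_gens n"
      using K2 unfolding K2_gens_def vertsD_def by blast
    moreover have "{#(i, j), (h, k)#} \<subseteq># mset_set F" "{#(h, k), (i, j)#} \<subseteq># mset_set F"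
      using add_mset_pair_subseteq_mset_set[OF fin] pq by auto
    ultimately show "in_monomial_ideal (K2_gens n) (mset_set F)"
      unfolding in_monomial_ideal_def by blast
  qed
  then show ?thesis
    using True by (auto simp: DeltaP_def)
qed (simp add: DeltaP_def)

lemma calA_memD:
  assumes "A \<in> calA n m"
  shows "finite A" "card A = m" "A \<subseteq> {1..n}" "\<And>i j. i \<in> A \<Longrightarrow> j \<in> A \<Longrightarrow> i + j \<noteq> n + 1"
  using assms unfolding calA_def by (auto intro: finite_subset)

lemma DeltaA_iff:
  assumes A: "A \<in> calA n m"
  shows "F \<in> DeltaA n A \<longleftrightarrow> F \<subseteq> T_of A \<and> strict_antichain F"
proof (cases "F \<subseteq> T_of A")
  case True
  have "T_of A \<subseteq> vertsD n"
    using calA_memD[OF A] by (force simp: T_of_def vertsD_def)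
  then have "F \<subseteq> vertsD n"
    using True by blast
  moreover have "K2_pair n p q \<longleftrightarrow> strictly_comparable p q" if "p \<in> F" "q \<in> F" for p q
  proof -
    have "fst p \<in> A" "snd p \<in> A" "fst q \<in> A" "snd q \<in> A"
      using that True by (auto simp: T_of_def)
    then show ?thesis
      using calA_memD(4)[OF A] by (auto simp: K2_pair_def)
  qed
  then have "(\<forall>p\<in>F. \<forall>q\<in>F. p \<noteq> q \<longrightarrow> \<not> K2_pair n p q) \<longleftrightarrow> strict_antichain F"
    unfolding strict_antichain_def by (metis strictly_comparable_irrefl)
  ultimately show ?thesis
    using True by (simp add: DeltaA_def DeltaP_iff)
qed (simp add: DeltaA_def)

lemma facet_DeltaA_iff:
  assumes A: "A \<in> calA n m"
  shows "facet (DeltaA n A) F \<longleftrightarrow> maximum_antichain A F"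
proof
  have finA: "finite A"
    using calA_memD[OF A] by blast
  assume F: "facet (DeltaA n A) F"
  then have F_face: "F \<subseteq> T_of A" "strict_antichain F"
    using DeltaA_iff[OF A] by (auto simp: facet_def)
  have "\<not> card F < card A"
  proof
    assume "card F < card A"
    then obtain t where t: "t \<in> addable A F"
      using addable_nonempty[OF finA F_face] by blast
    then have "insert t F \<in> DeltaA n A"
      using DeltaA_iff[OF A] F_face strict_antichain_insert_addable[OF F_face(2) t]
      by (simp add: addable_def)
    then show False
      using F t by (auto simp: facet_def addable_def)
  qed
  then show "maximum_antichain A F"
    using F_face card_strict_antichain_le[OF finA F_face] by (simp add: maximum_antichain_def)
next
  have finA: "finite A"
    using calA_memD[OF A] by blast
  assume F: "maximum_antichain A F"
  show "facet (DeltaA n A) F"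
    unfolding facet_def
  proof (intro conjI ballI impI)
    show "F \<in> DeltaA n A"
      using F DeltaA_iff[OF A] by (simp add: maximum_antichain_def)
    fix G assume "G \<in> DeltaA n A" "F \<subseteq> G"
    moreover from this have "card G \<le> card F" "finite G"
      using DeltaA_iff[OF A] card_strict_antichain_le[OF finA] F finite_subset_T_of[OF finA]
      by (auto simp: maximum_antichain_def)
    ultimately show "G = F"
      using card_seteq[of G F] by simp
  qed
qed

lemma facets_DeltaA_above:
  assumes A: "A \<in> calA n m" and S: "S \<subseteq> T_of A" "strict_antichain S" "card S + 1 = m"
  shows "{F. facet (DeltaA n A) F \<and> S \<subseteq> F} = (\<lambda>t. insert t S) ` addable A S"
  using maximum_antichains_above[OF calA_memD(1)[OF A] S(1,2)] S(3) calA_memD(2)[OF A]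
  by (simp add: facet_DeltaA_iff[OF A])

lemma calA_mirror:
  assumes n: "n = 2 * m" and A: "A \<in> calA n m" and c: "c \<in> {1..n}"
  shows "c \<in> A \<or> n + 1 - c \<in> A"
proof -
  define pair_rep where "pair_rep a = min a (n + 1 - a)" for a :: nat
  note A_props = calA_memD[OF A]
  have range: "pair_rep a \<in> {1..m}" if "a \<in> {1..n}" for a
    using that n unfolding pair_rep_def by (auto simp: min_def)
  have "inj_on pair_rep A"
  proof (rule inj_onI)
    fix a b assume ab: "a \<in> A" "b \<in> A" "pair_rep a = pair_rep b"
    then have "a \<le> n" "b \<le> n" "a + b \<noteq> n + 1"
      using A_props(3,4) by auto
    then show "a = b"
      using ab(3) unfolding pair_rep_def by (auto simp: min_def split: if_splits)
  qed
  moreover have "pair_rep ` A \<subseteq> {1..m}"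
    using range A_props(3) by auto
  ultimately have "pair_rep ` A = {1..m}"
    using A_props(2) by (intro card_subset_eq) (auto simp: card_image)
  moreover have "pair_rep c \<in> {1..m}"
    using range c by blast
  ultimately obtain a where a: "a \<in> A" "pair_rep a = pair_rep c"
    by (metis imageE)
  then have "a \<le> n"
    using A_props(3) by auto
  then have "a = c \<or> a = n + 1 - c"
    using a(2) c unfolding pair_rep_def by (auto simp: min_def split: if_splits)
  then show ?thesis
    using a(1) by auto
qed

lemma indices_DeltaP: "G \<in> DeltaP n \<Longrightarrow> indices G \<subseteq> {1..n}"
  by (force simp: DeltaP_def vertsD_def indices_def)

lemma subset_T_of_if_indices: "G \<in> DeltaP n \<Longrightarrow> indices G \<subseteq> A \<Longrightarrow> G \<subseteq> T_of A"
  by (force simp: DeltaP_def vertsD_def indices_def T_of_def)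

lemma indices_DeltaP_no_mirror:
  assumes n: "even n" and G: "G \<in> DeltaP n" and a: "a \<in> indices G" and b: "b \<in> indices G"
  shows "a + b \<noteq> n + 1"
proof
  assume sum: "a + b = n + 1"
  obtain p where p: "p \<in> G" "a = fst p \<or> a = snd p"
    using a by (auto simp: indices_def)
  obtain q where q: "q \<in> G" "b = fst q \<or> b = snd q"
    using b by (auto simp: indices_def)
  show False
  proof (cases "p = q")
    case True
    have "fst p + snd p \<noteq> n + 1"
      using G p(1) by (auto simp: DeltaP_def vertsD_def)
    then show False
      using p q True sum n by (auto; presburger)
  next
    case False
    then show False
      using G p q sum by (auto simp: DeltaP_iff K2_pair_def)
  qed
qed

lemma mirror_of_index_outside_calA:
  assumes n: "n = 2 * m" and A: "A \<in> calA n m" and G: "G \<in> DeltaP n"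
    and c: "c \<in> indices G" "c \<notin> A"
  shows "n + 1 - c \<in> A - indices G"
proof -
  have "c \<in> {1..n}"
    using indices_DeltaP[OF G] c by blast
  then show ?thesis
    using calA_mirror[OF n A] indices_DeltaP_no_mirror[OF _ G c(1), of "n + 1 - c"] c(2) n
    by auto
qed

lemma calA_swap:
  assumes n: "even n" and A: "A \<in> calA n m" and i: "i \<in> A"
  shows "(A - {i}) \<union> {n + 1 - i} \<in> calA n m"
proof -
  note A_props = calA_memD[OF A]
  have i_range: "1 \<le> i" "i \<le> n"
    using i A_props(3) by auto
  have mirror_notin: "n + 1 - i \<notin> A"
    using A_props(4)[OF i] i_range by force
  have "card ((A - {i}) \<union> {n + 1 - i}) = m"
    using mirror_notin A_props(1,2) i by (simp add: card_Diff_singleton card_gt_0_iff)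
      (metis Suc_pred card_gt_0_iff empty_iff)
  moreover have "(A - {i}) \<union> {n + 1 - i} \<subseteq> {1..n}"
    using A_props(3) i_range by auto
  moreover have "2 * (n + 1 - i) \<noteq> n + 1"
    using n i_range by presburger
  then have "a + b \<noteq> n + 1" if "a \<in> (A - {i}) \<union> {n + 1 - i}" "b \<in> (A - {i}) \<union> {n + 1 - i}"
    for a b
    using that A_props(4) i_range by auto
  ultimately show ?thesis
    unfolding calA_def by blast
qed

lemma facet_DeltaP_if_facet_DeltaA:
  assumes n: "n = 2 * m" and A: "A \<in> calA n m" and F: "facet (DeltaA n A) F"
  shows "facet (DeltaP n) F"
  unfolding facet_def
proof (intro conjI ballI impI)
  show "F \<in> DeltaP n"
    using F by (simp add: facet_def DeltaA_def)
  fix G assume G: "G \<in> DeltaP n" "F \<subseteq> G"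
  have "A \<subseteq> indices G"
    using maximum_antichain_indices[OF calA_memD(1)[OF A]] F G(2) indices_mono
    by (metis facet_DeltaA_iff[OF A])
  then have "indices G \<subseteq> A"
    using mirror_of_index_outside_calA[OF n A G(1)] by blast
  then have "G \<in> DeltaA n A"
    using G(1) subset_T_of_if_indices by (simp add: DeltaA_def)
  then show "G = F"
    using F G(2) by (simp add: facet_def)
qed

lemma facet_DeltaA_if_facet_DeltaP: "facet (DeltaP n) F \<Longrightarrow> F \<subseteq> T_of A \<Longrightarrow> facet (DeltaA n A) F"
  by (auto simp: facet_def DeltaA_def)

lemma facets_DeltaP_above_covering:
  assumes n: "n = 2 * m" and A: "A \<in> calA n m" and S: "A \<subseteq> indices S"
  shows "{F. facet (DeltaP n) F \<and> S \<subseteq> F} = {F. facet (DeltaA n A) F \<and> S \<subseteq> F}"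
proof (intro equalityI subsetI; clarify)
  fix F assume F: "facet (DeltaP n) F" "S \<subseteq> F"
  then have "F \<in> DeltaP n" "A \<subseteq> indices F"
    using S indices_mono[OF F(2)] by (auto simp: facet_def)
  then have "F \<subseteq> T_of A"
    using mirror_of_index_outside_calA[OF n A] subset_T_of_if_indices by blast
  then show "facet (DeltaA n A) F"
    by (rule facet_DeltaA_if_facet_DeltaP[OF F(1)])
qed (use facet_DeltaP_if_facet_DeltaA[OF n A] in blast)

lemma indices_within_swap:
  assumes n: "n = 2 * m" and A: "A \<in> calA n m" and G: "G \<in> DeltaP n"
    and covered: "A - {i} \<subseteq> indices G"
  shows "indices G \<subseteq> A \<union> {n + 1 - i}"
proof
  fix c assume c: "c \<in> indices G"
  show "c \<in> A \<union> {n + 1 - i}"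
  proof (cases "c \<in> A")
    case False
    then have "n + 1 - c = i"
      using mirror_of_index_outside_calA[OF n A G c] covered by blast
    moreover have "c \<le> n"
      using indices_DeltaP[OF G] c by auto
    ultimately show ?thesis by auto
  qed simp
qed

lemma facets_DeltaP_above_swap:
  assumes n: "n = 2 * m" and A: "A \<in> calA n m" and i: "i \<in> A" and S: "A - {i} \<subseteq> indices S"
  defines "A' \<equiv> (A - {i}) \<union> {n + 1 - i}"
  shows "{F. facet (DeltaP n) F \<and> S \<subseteq> F} =
    {F. facet (DeltaA n A) F \<and> S \<subseteq> F} \<union> {F. facet (DeltaA n A') F \<and> S \<subseteq> F}"
proof (intro equalityI subsetI)
  fix F assume "F \<in> {F. facet (DeltaP n) F \<and> S \<subseteq> F}"
  then have F: "facet (DeltaP n) F" "S \<subseteq> F" and F_face: "F \<in> DeltaP n"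
    by (auto simp: facet_def)
  have within: "indices F \<subseteq> A \<union> {n + 1 - i}"
    using S indices_mono[OF F(2)] by (intro indices_within_swap[OF n A F_face]) blast
  have "F \<subseteq> T_of A \<or> F \<subseteq> T_of A'"
  proof (cases "n + 1 - i \<in> indices F")
    case True
    then have "i \<notin> indices F"
      using indices_DeltaP_no_mirror[OF _ F_face, of i "n + 1 - i"] calA_memD(3)[OF A] i n by auto
    then have "indices F \<subseteq> A'"
      using within unfolding A'_def by blast
    then show ?thesis
      using subset_T_of_if_indices[OF F_face] by blast
  next
    case False
    then have "indices F \<subseteq> A"
      using within by blast
    then show ?thesis
      using subset_T_of_if_indices[OF F_face] by blast
  qed
  then show "F \<in> {F. facet (DeltaA n A) F \<and> S \<subseteq> F} \<union> {F. facet (DeltaA n A') F \<and> S \<subseteq> F}"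
    using F facet_DeltaA_if_facet_DeltaP by blast
next
  have "A' \<in> calA n m"
    unfolding A'_def using calA_swap[OF _ A i] n by simp
  then show "F \<in> {F. facet (DeltaP n) F \<and> S \<subseteq> F}"
    if "F \<in> {F. facet (DeltaA n A) F \<and> S \<subseteq> F} \<union> {F. facet (DeltaA n A') F \<and> S \<subseteq> F}" for F
    using that facet_DeltaP_if_facet_DeltaA[OF n] A by blast
qed

section \<open>Flipping a turn\<close>

lemma adjA_succ_le: "adjA A a b \<Longrightarrow> z \<in> A \<Longrightarrow> a < z \<Longrightarrow> b \<le> z"
  unfolding adjA_def by (meson not_le)

lemma adjA_pred_le: "adjA A a b \<Longrightarrow> z \<in> A \<Longrightarrow> z < b \<Longrightarrow> z \<le> a"
  unfolding adjA_def by (meson not_le)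

lemma adjA_succ_exists:
  assumes "finite A" "r \<in> A" "s \<in> A" "r < s"
  obtains w where "adjA A r w" "w \<le> s"
proof -
  define w where "w = Min {a \<in> A. r < a}"
  have fin: "finite {a \<in> A. r < a}"
    using assms by simp
  have "w \<in> A" "r < w"
    using Min_in[OF fin] assms unfolding w_def by blast+
  moreover have "w \<le> z" if "z \<in> A" "r < z" for z
    unfolding w_def using Min_le[OF fin] that by auto
  ultimately show ?thesis
    using that assms unfolding adjA_def by (meson not_le)
qed

lemma adjA_pred_exists:
  assumes "finite A" "r \<in> A" "s \<in> A" "r < s"
  obtains w where "adjA A w s" "r \<le> w"
proof -
  define w where "w = Max {a \<in> A. a < s}"
  have fin: "finite {a \<in> A. a < s}"
    using assms by simp
  have "w \<in> A" "w < s"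
    using Max_in[OF fin] assms unfolding w_def by blast+
  moreover have "z \<le> w" if "z \<in> A" "z < s" for z
    unfolding w_def using Max_ge[OF fin] that by auto
  ultimately show ?thesis
    using that assms unfolding adjA_def by (meson not_le)
qed

text \<open>Without an outgoing step, the points \<open>(r, s\<^sup>-)\<close> and \<open>(r\<^sup>+, s)\<close> would be blocked by
  two points of \<open>P\<close> that are strictly comparable with each other.\<close>

lemma maximum_antichain_step_out:
  assumes A: "finite A" and P: "maximum_antichain A P" and x: "(r, s) \<in> P" and less: "r < s"
  shows "out_h A P (r, s) \<or> out_v A P (r, s)"
proof (rule ccontr)
  assume no_out: "\<not> ?thesis"
  have P_T: "P \<subseteq> T_of A" and anti: "strict_antichain P"
    using P by (auto simp: maximum_antichain_def)
  have rs: "r \<in> A" "s \<in> A"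
    using x P_T by (auto simp: T_of_def)
  obtain s0 where s0: "adjA A s0 s" "r \<le> s0"
    using adjA_pred_exists[OF A rs less] .
  obtain r1 where r1: "adjA A r r1" "r1 \<le> s"
    using adjA_succ_exists[OF A rs less] .
  have "(r, s0) \<in> T_of A" "(r, s0) \<notin> P" "(r1, s) \<in> T_of A" "(r1, s) \<notin> P"
    using no_out s0 r1 rs by (auto simp: out_h_def out_v_def T_of_def adjA_def)
  then obtain p q where p: "p \<in> P" "strictly_comparable (r, s0) p"
    and q: "q \<in> P" "strictly_comparable (r1, s) q"
    using maximum_antichain_blocked[OF A P] by metis
  have incomparable: "\<not> strictly_comparable p (r, s)" "\<not> strictly_comparable q (r, s)"
    "\<not> strictly_comparable p q"
    using anti p q x by (auto simp: strict_antichain_def)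
  have in_A: "snd p \<in> A" "fst q \<in> A"
    using p q P_T by (auto simp: T_of_def)
  have "snd p = s" "r < fst p"
    using p(2) incomparable(1) adjA_succ_le[OF s0(1) in_A(1)] s0
    by (auto simp: strictly_comparable_def adjA_def)
  moreover have "fst q = r" "snd q < s"
    using q(2) incomparable(2) adjA_pred_le[OF r1(1) in_A(2)] r1
    by (auto simp: strictly_comparable_def adjA_def)
  ultimately show False
    using incomparable(3) by (auto simp: strictly_comparable_def)
qed

lemma maximum_antichain_remove_point:
  assumes A: "finite A" and P: "maximum_antichain A P" and x: "x \<in> P"
  shows "x \<in> addable A (P - {x})"
    and "t \<in> addable A (P - {x}) \<Longrightarrow> t \<noteq> x \<Longrightarrow> strictly_comparable t x"
proof -
  show "x \<in> addable A (P - {x})"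
    using P x by (auto simp: maximum_antichain_def addable_def strict_antichain_def)
  assume t: "t \<in> addable A (P - {x})" "t \<noteq> x"
  then have "t \<in> T_of A" "t \<notin> P"
    by (auto simp: addable_def)
  then obtain q where "q \<in> P" "strictly_comparable t q"
    by (rule maximum_antichain_blocked[OF A P])
  then show "strictly_comparable t x"
    using t by (auto simp: addable_def)
qed

text \<open>The alternative \<open>r = s\<close> is a left turn at the diagonal end of the path, which has no
  neighbour \<open>(r', s)\<close>.\<close>

lemma left_turn_corner_addable:
  assumes P: "maximum_antichain A P" and x: "(r, s) \<in> P"
    and r': "adjA A r r'" and s': "adjA A s s'"
    and right: "(r, s') \<in> P" and down: "(r', s) \<in> P \<or> r = s"
  shows "(r', s') \<in> addable A (P - {(r, s)})"
proof -
  have P_T: "P \<subseteq> T_of A" and anti: "strict_antichain P"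
    using P by (auto simp: maximum_antichain_def)
  have less: "r < r'" "s < s'" "r' \<in> A" "s' \<in> A"
    using r' s' by (auto simp: adjA_def)
  have "r \<le> s"
    using x P_T by (auto simp: T_of_def)
  then have "(r', s') \<in> T_of A"
    using less adjA_succ_le[OF r' less(4)] by (simp add: T_of_def)
  moreover have "\<not> strictly_comparable (r', s') q" if q: "q \<in> P - {(r, s)}" for q
  proof -
    obtain a b where ab: "q = (a, b)" by fastforce
    have "a \<in> A" "b \<in> A" "a \<le> b" "a \<noteq> r \<or> b \<noteq> s"
      using q P_T ab by (auto simp: T_of_def)
    moreover have "\<not> strictly_comparable (a, b) (r, s)" "\<not> strictly_comparable (a, b) (r, s')"
      "(r', s) \<in> P \<Longrightarrow> \<not> strictly_comparable (a, b) (r', s)"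
      using q anti x right ab by (auto simp: strict_antichain_def)
    ultimately have "\<not> strictly_comparable (a, b) (r', s')"
      using down less adjA_pred_le[OF r', of a] adjA_pred_le[OF s', of b]
      unfolding strictly_comparable_Pair by linarith
    then show ?thesis
      using ab strictly_comparable_commute by metis
  qed
  moreover have "(r', s') \<notin> P"
    using anti x less strictly_comparable_Pair[of r' s' r s]
    unfolding strict_antichain_def by blast
  ultimately show ?thesis
    by (auto simp: addable_def)
qed

lemma left_turn_flip:
  assumes A: "finite A" and P: "maximum_antichain A P" and x: "(r, s) \<in> P"
    and r': "adjA A r r'" and s': "adjA A s s'"
    and right: "(r, s') \<in> P" and down: "(r', s) \<in> P \<or> r = s"
  shows "addable A (P - {(r, s)}) = {(r, s), (r', s')}"
proof -
  have less: "r < r'" "s < s'" "r' \<in> A" "s' \<in> A"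
    using r' s' by (auto simp: adjA_def)
  have "t = (r', s')" if t: "t \<in> addable A (P - {(r, s)})" "t \<noteq> (r, s)" for t
  proof -
    obtain u v where uv: "t = (u, v)" by fastforce
    have "u \<in> A" "v \<in> A" "u \<le> v" "strictly_comparable (u, v) (r, s)"
      using t uv maximum_antichain_remove_point(2)[OF A P x] by (auto simp: addable_def T_of_def)
    moreover have "\<not> strictly_comparable (u, v) (r, s')"
      "(r', s) \<in> P \<Longrightarrow> \<not> strictly_comparable (u, v) (r', s)"
      using t uv right less by (auto simp: addable_def)
    ultimately have "r < u" "s < v" "v \<le> s'" "(r', s) \<in> P \<Longrightarrow> u \<le> r'"
      using less unfolding strictly_comparable_Pair by linarith+
    moreover have "r' \<le> u" "s' \<le> v"
      using adjA_succ_le[OF r' \<open>u \<in> A\<close>] adjA_succ_le[OF s' \<open>v \<in> A\<close>] \<open>r < u\<close> \<open>s < v\<close>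
      by auto
    moreover have "r = s \<Longrightarrow> r' = s'"
      using adjA_succ_le[OF r' less(4)] adjA_succ_le[OF s' less(3)] less by force
    ultimately show "t = (r', s')"
      using uv down \<open>u \<le> v\<close> by fastforce
  qed
  then show ?thesis
    using maximum_antichain_remove_point(1)[OF A P x]
      left_turn_corner_addable[OF P x r' s' right down] by blast
qed

lemma right_turn_corner_addable:
  assumes P: "maximum_antichain A P" and x: "(r, s) \<in> P"
    and r': "adjA A r' r" and s': "adjA A s' s"
    and up: "(r', s) \<in> P" and left: "(r, s') \<in> P \<or> r = s"
  shows "(r', s') \<in> addable A (P - {(r, s)})"
proof -
  have P_T: "P \<subseteq> T_of A" and anti: "strict_antichain P"
    using P by (auto simp: maximum_antichain_def)
  have less: "r' < r" "s' < s" "r' \<in> A" "s' \<in> A"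
    using r' s' by (auto simp: adjA_def)
  have "r \<le> s"
    using x P_T by (auto simp: T_of_def)
  then have "(r', s') \<in> T_of A"
    using less adjA_pred_le[OF s' less(3)] by (simp add: T_of_def)
  moreover have "\<not> strictly_comparable (r', s') q" if q: "q \<in> P - {(r, s)}" for q
  proof -
    obtain a b where ab: "q = (a, b)" by fastforce
    have "a \<in> A" "b \<in> A" "a \<le> b" "a \<noteq> r \<or> b \<noteq> s"
      using q P_T ab by (auto simp: T_of_def)
    moreover have "\<not> strictly_comparable (a, b) (r, s)" "\<not> strictly_comparable (a, b) (r', s)"
      "(r, s') \<in> P \<Longrightarrow> \<not> strictly_comparable (a, b) (r, s')"
      using q anti x up ab by (auto simp: strict_antichain_def)
    ultimately have "\<not> strictly_comparable (a, b) (r', s')"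
      using left less adjA_succ_le[OF r', of a] adjA_succ_le[OF s', of b]
      unfolding strictly_comparable_Pair by linarith
    then show ?thesis
      using ab strictly_comparable_commute by metis
  qed
  moreover have "(r', s') \<notin> P"
    using anti x less strictly_comparable_Pair[of r' s' r s]
    unfolding strict_antichain_def by blast
  ultimately show ?thesis
    by (auto simp: addable_def)
qed

lemma right_turn_flip:
  assumes A: "finite A" and P: "maximum_antichain A P" and x: "(r, s) \<in> P"
    and r': "adjA A r' r" and s': "adjA A s' s"
    and up: "(r', s) \<in> P" and left: "(r, s') \<in> P \<or> r = s"
  shows "addable A (P - {(r, s)}) = {(r, s), (r', s')}"
proof -
  have less: "r' < r" "s' < s" "r' \<in> A" "s' \<in> A"
    using r' s' by (auto simp: adjA_def)
  have "t = (r', s')" if t: "t \<in> addable A (P - {(r, s)})" "t \<noteq> (r, s)" for t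
  proof -
    obtain u v where uv: "t = (u, v)" by fastforce
    have "u \<in> A" "v \<in> A" "u \<le> v" "strictly_comparable (u, v) (r, s)"
      using t uv maximum_antichain_remove_point(2)[OF A P x] by (auto simp: addable_def T_of_def)
    moreover have "\<not> strictly_comparable (u, v) (r', s)"
      "(r, s') \<in> P \<Longrightarrow> \<not> strictly_comparable (u, v) (r, s')"
      using t uv up less by (auto simp: addable_def)
    ultimately have "u < r" "v < s" "r' \<le> u" "(r, s') \<in> P \<Longrightarrow> s' \<le> v"
      using less unfolding strictly_comparable_Pair by linarith+
    moreover have "u \<le> r'" "v \<le> s'"
      using adjA_pred_le[OF r' \<open>u \<in> A\<close>] adjA_pred_le[OF s' \<open>v \<in> A\<close>] \<open>u < r\<close> \<open>v < s\<close>
      by auto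
    moreover have "r = s \<Longrightarrow> r' = s'"
      using adjA_pred_le[OF r' less(4)] adjA_pred_le[OF s' less(3)] less by force
    ultimately show "t = (r', s')"
      using uv left \<open>u \<le> v\<close> by fastforce
  qed
  then show ?thesis
    using maximum_antichain_remove_point(1)[OF A P x]
      right_turn_corner_addable[OF P x r' s' up left] by blast
qed

lemma left_turnE:
  assumes A: "finite A" and P: "maximum_antichain A P" and turn: "left_turn A P (r, s)"
  obtains r' s' where "adjA A r r'" "adjA A s s'" "(r, s') \<in> P" "(r', s) \<in> P \<or> r = s"
proof -
  obtain s' where s': "adjA A s s'" "(r, s') \<in> P"
    using turn by (auto simp: left_turn_def in_h_def)
  from turn consider "out_v A P (r, s)" | "\<not> (out_h A P (r, s) \<or> out_v A P (r, s))"
    unfolding left_turn_def by blast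
  then show thesis
  proof cases
    case 1
    then show thesis
      using that s' by (auto simp: out_v_def)
  next
    case 2
    have "r \<le> s"
      using turn P by (auto simp: left_turn_def maximum_antichain_def T_of_def)
    then have "r = s"
      using 2 maximum_antichain_step_out[OF A P] turn by (force simp: left_turn_def)
    then show thesis
      using that s' by blast
  qed
qed

lemma right_turnE:
  assumes A: "finite A" and P: "maximum_antichain A P" and turn: "right_turn A P (r, s)"
  obtains r' s' where "adjA A r' r" "adjA A s' s" "(r', s) \<in> P" "(r, s') \<in> P \<or> r = s"
proof -
  obtain r' where r': "adjA A r' r" "(r', s) \<in> P"
    using turn by (auto simp: right_turn_def in_v_def)
  from turn consider "out_h A P (r, s)" | "\<not> (out_h A P (r, s) \<or> out_v A P (r, s))"
    unfolding right_turn_def by blast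
  then show thesis
  proof cases
    case 1
    then show thesis
      using that r' by (auto simp: out_h_def)
  next
    case 2
    have "r \<le> s"
      using turn P by (auto simp: right_turn_def maximum_antichain_def T_of_def)
    then have "r = s"
      using 2 maximum_antichain_step_out[OF A P] turn by (force simp: right_turn_def)
    then show thesis
      using that r' by blast
  qed
qed

lemma turn_flip:
  assumes A: "finite A" and P: "maximum_antichain A P" and x: "x \<in> P"
    and turn: "left_turn A P x \<or> right_turn A P x"
  obtains y where "y \<noteq> x" "addable A (P - {x}) = {x, y}" "A \<subseteq> indices (P - {x})"
proof -
  obtain r s where rs: "x = (r, s)" by fastforce
  obtain r' s' where flip: "addable A (P - {x}) = {x, (r', s')}" and "r' \<noteq> r"
    and "r \<in> indices (P - {x})" "s \<in> indices (P - {x})"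
  proof (cases "left_turn A P x")
    case True
    then obtain r' s' where adj: "adjA A r r'" "adjA A s s'"
      and nbrs: "(r, s') \<in> P" "(r', s) \<in> P \<or> r = s"
      using left_turnE[OF A P] rs by blast
    then have "(r, s') \<in> P - {x}" "(r', s) \<in> P - {x} \<or> r = s"
      using rs by (auto simp: adjA_def)
    then show thesis
      using that left_turn_flip[OF A P x[unfolded rs] adj nbrs] rs adj
      by (auto simp: adjA_def intro: mem_indicesI)
  next
    case False
    then obtain r' s' where adj: "adjA A r' r" "adjA A s' s"
      and nbrs: "(r', s) \<in> P" "(r, s') \<in> P \<or> r = s"
      using right_turnE[OF A P] turn rs by blast
    then have "(r', s) \<in> P - {x}" "(r, s') \<in> P - {x} \<or> r = s"
      using rs by (auto simp: adjA_def)
    then show thesis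
      using that right_turn_flip[OF A P x[unfolded rs] adj nbrs] rs adj
      by (auto simp: adjA_def intro: mem_indicesI)
  qed
  moreover have "A \<subseteq> indices (P - {x}) \<union> {r, s}"
    using maximum_antichain_indices[OF A P] rs by (auto simp: indices_def)
  ultimately show thesis
    using that[of "(r', s')"] rs by auto
qed

section \<open>Facets through \<open>P - {x}\<close>\<close>

lemma facet_DeltaA_minus_point:
  assumes A: "A \<in> calA n m" and P: "facet (DeltaA n A) P" and x: "x \<in> P"
  shows "P - {x} \<subseteq> T_of A" "strict_antichain (P - {x})" "card (P - {x}) + 1 = m"
proof -
  have P_max: "maximum_antichain A P"
    using P facet_DeltaA_iff[OF A] by blast
  moreover have "finite P"
    using P_max finite_subset_T_of[OF calA_memD(1)[OF A]] by (auto simp: maximum_antichain_def)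
  then have "card P > 0"
    using x card_gt_0_iff by blast
  ultimately show "P - {x} \<subseteq> T_of A" "strict_antichain (P - {x})" "card (P - {x}) + 1 = m"
    using x calA_memD(2)[OF A] strict_antichain_subset[of P "P - {x}"]
    by (auto simp: maximum_antichain_def card_Diff_singleton card_gt_0_iff)
qed

lemma facets_above_removed_turn:
  assumes n: "n = 2 * m" and A: "A \<in> calA n m" and P: "facet (DeltaA n A) P" and x: "x \<in> P"
    and turn: "left_turn A P x \<or> right_turn A P x"
  obtains Q where "Q \<noteq> P" "{F. facet (DeltaP n) F \<and> P - {x} \<subseteq> F} = {P, Q}"
    "{F. facet (DeltaA n A) F \<and> P - {x} \<subseteq> F} = {P, Q}"
proof -
  have P_max: "maximum_antichain A P"
    using P facet_DeltaA_iff[OF A] by blast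
  obtain y where y: "y \<noteq> x" "addable A (P - {x}) = {x, y}" "A \<subseteq> indices (P - {x})"
    using turn_flip[OF calA_memD(1)[OF A] P_max x turn] .
  have "{F. facet (DeltaA n A) F \<and> P - {x} \<subseteq> F} = {P, insert y (P - {x})}"
    using facets_DeltaA_above[OF A facet_DeltaA_minus_point[OF A P x]] y(2) x by auto
  moreover have "insert y (P - {x}) \<noteq> P"
    using y(1,2) by (auto simp: addable_def)
  ultimately show thesis
    using that facets_DeltaP_above_covering[OF n A y(3)] by auto
qed

lemma facet_DeltaA_remove_index:
  assumes A: "A \<in> calA n m" and P: "facet (DeltaA n A) P" and x: "x \<in> P"
    and i: "i \<in> A" "is_index P x i"
  shows "maximum_antichain (A - {i}) (P - {x})"
proof -
  note S = facet_DeltaA_minus_point[OF A P x]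
  have "i \<notin> indices (P - {x})"
    using i(2) by (auto simp: is_index_def indices_def)
  then have "P - {x} \<subseteq> T_of (A - {i})"
    using S(1) by (force simp: T_of_def indices_def)
  then show ?thesis
    using S calA_memD(1,2)[OF A] i(1) by (simp add: maximum_antichain_def card_Diff_singleton)
qed

lemma facets_DeltaA_above_new_index:
  assumes A: "insert c B \<in> calA n m" and c: "c \<notin> B" and S: "maximum_antichain B S"
  obtains t where "{F. facet (DeltaA n (insert c B)) F \<and> S \<subseteq> F} = {insert t S}"
    and "c = fst t \<or> c = snd t"
proof -
  have finB: "finite B"
    using calA_memD(1)[OF A] by simp
  obtain t where t: "addable (insert c B) S = {t}" "c = fst t \<or> c = snd t"
    by (rule maximum_antichain_addable_new_index[OF finB S c])
  have "S \<subseteq> T_of (insert c B)" "strict_antichain S" "card S + 1 = m"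
    using S T_of_mono[of B "insert c B"] calA_memD(2)[OF A] finB c
    by (auto simp: maximum_antichain_def)
  then show thesis
    using that facets_DeltaA_above[OF A] t by auto
qed

lemma facets_above_removed_isolated:
  assumes n: "n = 2 * m" and A: "A \<in> calA n m" and P: "facet (DeltaA n A) P" and x: "x \<in> P"
    and i: "i \<in> A" "is_index P x i"
  defines "A' \<equiv> (A - {i}) \<union> {n + 1 - i}"
  obtains Q where "Q \<noteq> P" "{F. facet (DeltaP n) F \<and> P - {x} \<subseteq> F} = {P, Q}"
    "{F. facet (DeltaA n A') F \<and> P - {x} \<subseteq> F} = {Q}" "P - {x} \<in> DeltaA n A'"
proof -
  define S where "S = P - {x}"
  have S: "maximum_antichain (A - {i}) S"
    unfolding S_def by (rule facet_DeltaA_remove_index[OF A P x i])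
  have mirror: "n + 1 - i \<notin> A"
    using calA_memD(3,4)[OF A] i(1) by force
  have "insert i (A - {i}) \<in> calA n m" "i \<notin> A - {i}"
    using A i(1) by (simp_all add: insert_absorb)
  from facets_DeltaA_above_new_index[OF this S]
  obtain t0 where "{F. facet (DeltaA n (insert i (A - {i}))) F \<and> S \<subseteq> F} = {insert t0 S}"
    by blast
  then have "{F. facet (DeltaA n A) F \<and> S \<subseteq> F} = {insert t0 S}"
    using i(1) by (simp add: insert_absorb)
  moreover have "P \<in> {F. facet (DeltaA n A) F \<and> S \<subseteq> F}"
    using P by (auto simp: S_def)
  ultimately have facets_A: "{F. facet (DeltaA n A) F \<and> S \<subseteq> F} = {P}"
    by auto
  have A'_eq: "A' = insert (n + 1 - i) (A - {i})"
    by (auto simp: A'_def)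
  have A': "A' \<in> calA n m"
    using calA_swap[OF _ A i(1)] n by (simp add: A'_def)
  have "n + 1 - i \<notin> A - {i}"
    using mirror by blast
  from facets_DeltaA_above_new_index[OF A'[unfolded A'_eq] this S]
  obtain t where facets_A': "{F. facet (DeltaA n A') F \<and> S \<subseteq> F} = {insert t S}"
    and t: "n + 1 - i = fst t \<or> n + 1 - i = snd t"
    unfolding A'_eq by blast
  have "A - {i} \<subseteq> indices S"
    using maximum_antichain_indices[OF _ S] calA_memD(1)[OF A] by simp
  then have "{F. facet (DeltaP n) F \<and> S \<subseteq> F} =
      {F. facet (DeltaA n A) F \<and> S \<subseteq> F} \<union> {F. facet (DeltaA n A') F \<and> S \<subseteq> F}"
    unfolding A'_def by (rule facets_DeltaP_above_swap[OF n A i(1)])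
  then have facets_P: "{F. facet (DeltaP n) F \<and> S \<subseteq> F} = {P, insert t S}"
    using facets_A facets_A' by (simp add: insert_commute)
  have "insert t S \<noteq> P"
    using t mirror facet_DeltaA_iff[OF A] P by (auto simp: maximum_antichain_def T_of_def)
  moreover have "S \<in> DeltaA n A'"
    using S DeltaA_iff[OF A'] T_of_mono[of "A - {i}" A'] by (auto simp: maximum_antichain_def A'_def)
  ultimately show thesis
    using that facets_P facets_A' by (simp add: S_def)
qed

theorem lemma5p2:
  fixes m n :: nat and A :: "nat set" and P :: "(nat \<times> nat) set" and x :: "nat \<times> nat"
  assumes "n = 2 * m"
    and "facet (DeltaP n) P"
    and "A \<in> calA n m"
    and "facet (DeltaA n A) P"
    and "x \<in> P"
  shows "(left_turn A P x \<or> right_turn A P x \<longrightarrow>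
            (\<exists>Q. {F. facet (DeltaP n) F \<and> P - {x} \<subseteq> F} = {P, Q} \<and> Q \<noteq> P \<and>
                 facet (DeltaA n A) Q \<and>
                 (\<forall>Q'. facet (DeltaA n A) Q' \<and> Q' \<noteq> P \<and> P - {x} \<subseteq> Q' \<longrightarrow> Q' = Q)))
       \<and> (\<forall>i. isolated A P x \<and> i \<in> A \<and> is_index P x i \<longrightarrow>
            (let A' = (A - {i}) \<union> {n + 1 - i} in
              P - {x} \<in> DeltaA n A' \<and>
              (\<exists>Q. {F. facet (DeltaP n) F \<and> P - {x} \<subseteq> F} = {P, Q} \<and> Q \<noteq> P \<and>
                   facet (DeltaA n A') Q \<and> P - {x} \<subseteq> Q \<and>
                   (\<forall>Q'. facet (DeltaA n A') Q' \<and> P - {x} \<subseteq> Q' \<longrightarrow> Q' = Q))))"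
proof (intro conjI allI impI)
  assume "left_turn A P x \<or> right_turn A P x"
  then obtain Q where "Q \<noteq> P" "{F. facet (DeltaP n) F \<and> P - {x} \<subseteq> F} = {P, Q}"
    "{F. facet (DeltaA n A) F \<and> P - {x} \<subseteq> F} = {P, Q}"
    by (rule facets_above_removed_turn[OF assms(1,3,4,5)])
  then show "\<exists>Q. {F. facet (DeltaP n) F \<and> P - {x} \<subseteq> F} = {P, Q} \<and> Q \<noteq> P \<and>
      facet (DeltaA n A) Q \<and>
      (\<forall>Q'. facet (DeltaA n A) Q' \<and> Q' \<noteq> P \<and> P - {x} \<subseteq> Q' \<longrightarrow> Q' = Q)"
    by blast
next
  fix i assume "isolated A P x \<and> i \<in> A \<and> is_index P x i"
  then have "i \<in> A" "is_index P x i"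
    by blast+
  then obtain Q where "Q \<noteq> P" "{F. facet (DeltaP n) F \<and> P - {x} \<subseteq> F} = {P, Q}"
    "{F. facet (DeltaA n ((A - {i}) \<union> {n + 1 - i})) F \<and> P - {x} \<subseteq> F} = {Q}"
    "P - {x} \<in> DeltaA n ((A - {i}) \<union> {n + 1 - i})"
    by (rule facets_above_removed_isolated[OF assms(1,3,4,5)])
  then show "let A' = (A - {i}) \<union> {n + 1 - i} in
      P - {x} \<in> DeltaA n A' \<and>
      (\<exists>Q. {F. facet (DeltaP n) F \<and> P - {x} \<subseteq> F} = {P, Q} \<and> Q \<noteq> P \<and>
        facet (DeltaA n A') Q \<and> P - {x} \<subseteq> Q \<and>
        (\<forall>Q'. facet (DeltaA n A') Q' \<and> P - {x} \<subseteq> Q' \<longrightarrow> Q' = Q))"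
    unfolding Let_def by blast
qed

end
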